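(* Let $0<\eta<1$, set $\gamma_0=0$ and $\gamma_j=(1+\eta\gamma_{j-1}^2)/2$ for $j\ge1$. Then $(\gamma_j)_{j\ge0}$ is an infinite $g$-sequence. Moreover, with $\varepsilon=1-\eta$, the limit $L_\varepsilon=\lim_{j\to\infty}\gamma_j$ exists, $L_\varepsilon=\dfrac{1}{1+\sqrt\varepsilon}$, and for every $j\ge0$, \[ L_\varepsilon-\gamma_j\le L_\varepsilon(1-\sqrt\varepsilon)^j. \]
   Context: An infinite $g$-sequence is a sequence $(\gamma_k)_{k\ge0}$ with $\gamma_0=0$, $\gamma_1=1/2$ and, for every $k\ge1$, $0<\gamma_k<1$ and $\gamma_k<\gamma_{k+1}<(1+\gamma_k^2)/2$. *)

theory Defs
  imports Complex_Main
begin

definition infinite_g_sequence :: "(nat \<Rightarrow> real) \<Rightarrow> bool" where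
  "infinite_g_sequence \<gamma> \<longleftrightarrow>
     \<gamma> 0 = 0 \<and> \<gamma> 1 = 1/2 \<and>
     (\<forall>k\<ge>1. 0 < \<gamma> k \<and> \<gamma> k < 1 \<and> \<gamma> k < \<gamma> (Suc k) \<and> \<gamma> (Suc k) < (1 + (\<gamma> k)^2) / 2)"

fun eta_seq :: "real \<Rightarrow> nat \<Rightarrow> real" where
  "eta_seq \<eta> 0 = 0"
| "eta_seq \<eta> (Suc j) = (1 + \<eta> * (eta_seq \<eta> j)^2) / 2"

end

theory Submission
  imports Defs
begin

text \<open>With \<open>s = sqrt (1 - \<eta>)\<close> we have \<open>\<eta> = (1 - s)(1 + s)\<close>, and \<open>L = 1/(1 + s)\<close> is the smaller
  fixed point of \<open>x \<mapsto> (1 + \<eta> x\<^sup>2)/2\<close>, the other one being \<open>1/(1 - s)\<close>. The sequence starts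
  below \<open>L\<close>, stays below it, and increases because \<open>1 - 2x + \<eta> x\<^sup>2 = (1 - (1 + s) x)(1 - (1 - s) x)\<close>
  is positive below \<open>L\<close>. The error contracts by the factor \<open>\<eta> (L + x)/2 \<le> \<eta> L = 1 - s\<close>.\<close>

definition eta_seq_limit :: "real \<Rightarrow> real" where
  "eta_seq_limit \<eta> = 1 / (1 + sqrt (1 - \<eta>))"

lemma eta_eq_factors:
  assumes "\<eta> \<le> 1"
  shows "\<eta> = (1 - sqrt (1 - \<eta>)) * (1 + sqrt (1 - \<eta>))"
proof -
  have "sqrt (1 - \<eta>)^2 = 1 - \<eta>" using assms by simp
  then show ?thesis by (simp add: algebra_simps power2_eq_square)
qed

lemma eta_seq_limit_pos: "\<eta> \<le> 1 \<Longrightarrow> 0 < eta_seq_limit \<eta>"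
  by (simp add: eta_seq_limit_def add_pos_nonneg)

lemma eta_seq_limit_le_one: "\<eta> \<le> 1 \<Longrightarrow> eta_seq_limit \<eta> \<le> 1"
  by (simp add: eta_seq_limit_def divide_le_eq_1 add_pos_nonneg)

lemma mult_eta_seq_limit:
  assumes "\<eta> \<le> 1"
  shows "\<eta> * eta_seq_limit \<eta> = 1 - sqrt (1 - \<eta>)"
proof -
  define s where "s = sqrt (1 - \<eta>)"
  have "1 + s > 0" using assms by (simp add: s_def add_pos_nonneg)
  have eta: "\<eta> = (1 - s) * (1 + s)"
    unfolding s_def by (rule eta_eq_factors[OF assms])
  have "\<eta> * eta_seq_limit \<eta> = (1 - s) * (1 + s) / (1 + s)"
    unfolding eta_seq_limit_def s_def[symmetric] by (subst eta) simp
  also have "\<dots> = 1 - s" using \<open>1 + s > 0\<close> by simp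
  finally show ?thesis by (simp add: s_def)
qed

lemma eta_seq_limit_fixed_point:
  assumes "\<eta> \<le> 1"
  shows "(1 + \<eta> * eta_seq_limit \<eta>^2) / 2 = eta_seq_limit \<eta>"
proof -
  define s where "s = sqrt (1 - \<eta>)"
  have s: "0 \<le> s" using assms by (simp add: s_def)
  have "\<eta> * eta_seq_limit \<eta>^2 = (1 - s) * eta_seq_limit \<eta>"
    using mult_eta_seq_limit[OF assms] by (simp add: power2_eq_square s_def)
  moreover have "1 = (1 + s) * eta_seq_limit \<eta>"
    using s by (simp add: eta_seq_limit_def flip: s_def)
  ultimately show ?thesis by (simp add: algebra_simps)
qed

lemma eta_seq_nonneg: "0 \<le> \<eta> \<Longrightarrow> 0 \<le> eta_seq \<eta> j"
  by (cases j) simp_all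

lemma eta_seq_less_limit:
  assumes "0 < \<eta>" "\<eta> \<le> 1"
  shows "eta_seq \<eta> j < eta_seq_limit \<eta>"
proof (induction j)
  case 0
  then show ?case using eta_seq_limit_pos[OF assms(2)] by simp
next
  case (Suc j)
  have "eta_seq \<eta> j ^ 2 < eta_seq_limit \<eta> ^ 2"
    using Suc eta_seq_nonneg assms(1) by (simp add: power_strict_mono)
  then have "\<eta> * eta_seq \<eta> j ^ 2 < \<eta> * eta_seq_limit \<eta> ^ 2"
    using assms(1) by simp
  then show ?case using eta_seq_limit_fixed_point[OF assms(2)] by simp
qed

lemma eta_seq_less_Suc:
  assumes "0 < \<eta>" "\<eta> \<le> 1"
  shows "eta_seq \<eta> j < eta_seq \<eta> (Suc j)"
proof -
  define s where "s = sqrt (1 - \<eta>)"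
  define x where "x = eta_seq \<eta> j"
  have "0 \<le> s" "0 \<le> x" using assms by (simp_all add: s_def x_def eta_seq_nonneg)
  have "x < 1 / (1 + s)"
    using eta_seq_less_limit[OF assms] by (simp add: x_def s_def eta_seq_limit_def)
  then have below_root: "(1 + s) * x < 1"
    using \<open>0 \<le> s\<close> by (simp add: field_simps)
  moreover have "(1 - s) * x \<le> (1 + s) * x"
    using \<open>0 \<le> s\<close> \<open>0 \<le> x\<close> by (intro mult_right_mono) auto
  ultimately have "(1 - s) * x < 1"
    by linarith
  then have "0 < (1 - (1 + s) * x) * (1 - (1 - s) * x)"
    using below_root by simp
  also have "\<dots> = 1 - 2 * x + \<eta> * x^2"
    by (subst eta_eq_factors[OF assms(2)]) (simp add: s_def algebra_simps power2_eq_square)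
  finally show ?thesis by (simp add: x_def)
qed

lemma strict_mono_eta_seq: "0 < \<eta> \<Longrightarrow> \<eta> \<le> 1 \<Longrightarrow> strict_mono (eta_seq \<eta>)"
  unfolding strict_mono_Suc_iff using eta_seq_less_Suc by blast

lemma eta_seq_error_bound:
  assumes "0 < \<eta>" "\<eta> \<le> 1"
  shows "eta_seq_limit \<eta> - eta_seq \<eta> j \<le> eta_seq_limit \<eta> * (1 - sqrt (1 - \<eta>)) ^ j"
proof (induction j)
  case 0
  then show ?case using eta_seq_nonneg assms(1) by simp
next
  case (Suc j)
  define L where "L = eta_seq_limit \<eta>"
  define x where "x = eta_seq \<eta> j"
  have "0 \<le> x" "x < L"
    using eta_seq_nonneg eta_seq_less_limit assms by (simp_all add: x_def L_def less_imp_le)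
  have "L - eta_seq \<eta> (Suc j) = (1 + \<eta> * L^2) / 2 - (1 + \<eta> * x^2) / 2"
    using eta_seq_limit_fixed_point[OF assms(2)] by (simp add: L_def x_def)
  also have "\<dots> = \<eta> * (L - x) * (L + x) / 2"
    by (simp add: field_simps power2_eq_square)
  also have "\<dots> \<le> \<eta> * (L - x) * (2 * L) / 2"
    using \<open>0 \<le> x\<close> \<open>x < L\<close> assms(1) by (intro divide_right_mono mult_left_mono) auto
  also have "\<dots> = (\<eta> * L) * (L - x)"
    by simp
  also have "\<dots> = (1 - sqrt (1 - \<eta>)) * (L - x)"
    using mult_eta_seq_limit[OF assms(2)] by (simp add: L_def)
  also have "\<dots> \<le> (1 - sqrt (1 - \<eta>)) * (L * (1 - sqrt (1 - \<eta>)) ^ j)"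
    using Suc assms by (intro mult_left_mono) (simp_all add: L_def x_def)
  finally show ?case by (simp add: L_def algebra_simps)
qed

lemma eta_seq_tendsto_limit:
  assumes "0 < \<eta>" "\<eta> < 1"
  shows "eta_seq \<eta> \<longlonglongrightarrow> eta_seq_limit \<eta>"
proof -
  define L where "L = eta_seq_limit \<eta>"
  have "(\<lambda>j. L * (1 - sqrt (1 - \<eta>)) ^ j) \<longlonglongrightarrow> L * 0"
    using assms by (intro tendsto_mult tendsto_const LIMSEQ_power_zero) auto
  then have bound_to_zero: "(\<lambda>j. L * (1 - sqrt (1 - \<eta>)) ^ j) \<longlonglongrightarrow> 0"
    by simp
  have "(\<lambda>j. L - eta_seq \<eta> j) \<longlonglongrightarrow> 0"
  proof (rule tendsto_sandwich[OF _ _ tendsto_const bound_to_zero])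
    show "\<forall>\<^sub>F j in sequentially. 0 \<le> L - eta_seq \<eta> j"
      using eta_seq_less_limit assms by (simp add: L_def less_imp_le)
    show "\<forall>\<^sub>F j in sequentially. L - eta_seq \<eta> j \<le> L * (1 - sqrt (1 - \<eta>)) ^ j"
      using eta_seq_error_bound assms by (simp add: L_def)
  qed
  then have "(\<lambda>j. L - (L - eta_seq \<eta> j)) \<longlonglongrightarrow> L - 0"
    by (intro tendsto_diff tendsto_const)
  then show ?thesis by (simp add: L_def)
qed

lemma infinite_g_sequence_eta_seq:
  assumes "0 < \<eta>" "\<eta> < 1"
  shows "infinite_g_sequence (eta_seq \<eta>)"
  unfolding infinite_g_sequence_def
proof (intro conjI allI impI)
  fix k :: nat
  assume "k \<ge> 1"
  have "eta_seq \<eta> 0 < eta_seq \<eta> k"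
    using strict_monoD[OF strict_mono_eta_seq, of \<eta> 0 k] assms \<open>k \<ge> 1\<close> by simp
  then show pos: "0 < eta_seq \<eta> k" by simp
  show "eta_seq \<eta> k < 1"
    using eta_seq_less_limit[of \<eta> k] eta_seq_limit_le_one[of \<eta>] assms by simp
  show "eta_seq \<eta> k < eta_seq \<eta> (Suc k)"
    using eta_seq_less_Suc assms by simp
  have "\<eta> * eta_seq \<eta> k ^ 2 < eta_seq \<eta> k ^ 2"
    using assms pos by simp
  then show "eta_seq \<eta> (Suc k) < (1 + eta_seq \<eta> k ^ 2) / 2" by simp
qed simp_all

theorem mainTheorem13:
  fixes \<eta> :: real
  assumes "0 < \<eta>" and "\<eta> < 1"
  defines "\<epsilon> \<equiv> 1 - \<eta>"
  shows "infinite_g_sequence (eta_seq \<eta>)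
    \<and> (\<exists>L. eta_seq \<eta> \<longlonglongrightarrow> L \<and> L = 1 / (1 + sqrt \<epsilon>)
         \<and> (\<forall>j. L - eta_seq \<eta> j \<le> L * (1 - sqrt \<epsilon>) ^ j))"
proof (intro conjI exI)
  show "infinite_g_sequence (eta_seq \<eta>)"
    using infinite_g_sequence_eta_seq assms by simp
  show "eta_seq \<eta> \<longlonglongrightarrow> eta_seq_limit \<eta>"
    using eta_seq_tendsto_limit assms by simp
  show "eta_seq_limit \<eta> = 1 / (1 + sqrt \<epsilon>)"
    by (simp add: eta_seq_limit_def \<epsilon>_def)
  show "\<forall>j. eta_seq_limit \<eta> - eta_seq \<eta> j \<le> eta_seq_limit \<eta> * (1 - sqrt \<epsilon>) ^ j"
    using eta_seq_error_bound assms by (simp add: \<epsilon>_def)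
qed

end
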